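(* Let $P$ be any of cost-SR, cost-PR, cost-SPR, cost-LPR, cost-BC. The system MaxSAT resolution $+$ $P$ is complete: for every MaxSAT instance with satisfiable hard clauses $H_0=\{C_1\lor b_1,\dots,C_m\lor b_m\}$ and soft clauses $S_0=\{\lnot b_1,\dots,\lnot b_m\}$ and with $\mathrm{cost}(H_0)=k$, there is a MaxSAT resolution $+$ $P$ derivation $(H_0,S_0),\dots,(H_t,S_t)$ such that $S_t$ contains $k$ copies of the empty clause $\bot$.
   Context: $b_1,\dots,b_m$ are distinct blocking variables not occurring in $C_1,\dots,C_m$; $\mathrm{cost}(\alpha)=\sum_i\alpha(b_i)$, $\mathrm{cost}(H)=\min\{\mathrm{cost}(\alpha):\alpha\text{ total},\alpha\models H\}$. Notation: substitutions map variables to $0,1$ or literals; $(\sigma\circ\tau)(x)=\sigma(\tau(x))$; $C{\upharpoonright}_\sigma$ and $\Gamma{\upharpoonright}_\sigma$ denote restriction (clauses set to $1$ removed); $\lnot C$ is the partial assignment falsifying $C$; $\Gamma\vdash_1 C$ means unit propagation on $\Gamma{\upharpoonright}_{\lnot C}$ derives $\bot$. $C$ is cost-SR w.r.t. $\Gamma$ if some substitution $\sigma$ satisfies (1) $\Gamma{\upharpoonright}_{\lnot C}\vdash_1(\Gamma\cup\{C\}){\upharpoonright}_\sigma$ and (2) $\mathrm{cost}(\tau\circ\sigma)\le\mathrm{cost}(\tau)$ for all total $\tau\supseteq\lnot C$; cost-PR if $\sigma$ can be a partial assignment; cost-SPR if a partial assignment with the same domain as $\lnot C$; cost-LPR if moreover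 it differs from $\lnot C$ on exactly one variable. $C\lor\ell$ is cost-BC w.r.t. $\Gamma$ if for every $D\lor\lnot\ell\in\Gamma$, $C\lor D$ is a tautology, and $\ell$ is not a positive blocking variable. A MaxSAT resolution $+$ $P$ derivation is a sequence of pairs of multisets $(H_i,S_i)$ where each step is one of: (a) $S_i=S_{i-1}$, $H_i=H_{i-1}\cup\{C\}$ with $C$ obtained by resolution (or weakening) from $H_{i-1}$; (a') $S_i=S_{i-1}$, $H_i=H_{i-1}\cup\{C\}$ with $C$ satisfying $P$ w.r.t. $H_{i-1}$; (b) $S_i=S_{i-1}\cup\{C\}$ for some $C\in H_{i-1}$, $H_i=H_{i-1}$; (c) $S_i=S_{i-1}\setminus\{C\}\cup\{C\lor x,C\lor\lnot x\}$ for $C\in S_{i-1}$, $H_i=H_{i-1}$; (d) $S_i=S_{i-1}\setminus\{C\lor x,C\lor\lnot x\}\cup\{C\}$ for $\{C\lor x,C\lor\lnot x\}\subseteq S_{i-1}$, $H_i=H_{i-1}$. *)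

theory Defs
  imports Main "HOL-Library.Multiset"
begin

datatype 'v lit = Pos 'v | Neg 'v

fun var :: "'v lit \<Rightarrow> 'v" where
  "var (Pos x) = x" | "var (Neg x) = x"

fun negate :: "'v lit \<Rightarrow> 'v lit" where
  "negate (Pos x) = Neg x" | "negate (Neg x) = Pos x"

type_synonym 'v clause = "'v lit set"

definition tautology :: "'v clause \<Rightarrow> bool" where
  "tautology C \<longleftrightarrow> (\<exists>x. Pos x \<in> C \<and> Neg x \<in> C)"

fun lit_val :: "('v \<Rightarrow> bool) \<Rightarrow> 'v lit \<Rightarrow> bool" where
  "lit_val \<alpha> (Pos x) = \<alpha> x" | "lit_val \<alpha> (Neg x) = (\<not> \<alpha> x)"

definition sat_clause :: "('v \<Rightarrow> bool) \<Rightarrow> 'v clause \<Rightarrow> bool" where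
  "sat_clause \<alpha> C \<longleftrightarrow> (\<exists>l\<in>C. lit_val \<alpha> l)"

definition sat_set :: "('v \<Rightarrow> bool) \<Rightarrow> 'v clause set \<Rightarrow> bool" where
  "sat_set \<alpha> \<Gamma> \<longleftrightarrow> (\<forall>C\<in>\<Gamma>. sat_clause \<alpha> C)"

text \<open>cost(alpha) = number of blocking variables set to 1 (B = {b_1,...,b_m}, distinct).\<close>
definition cost :: "'v set \<Rightarrow> ('v \<Rightarrow> bool) \<Rightarrow> nat" where
  "cost B \<alpha> = card {b\<in>B. \<alpha> b}"

definition cost_set :: "'v set \<Rightarrow> 'v clause set \<Rightarrow> nat" where
  "cost_set B H = (LEAST c. \<exists>\<alpha>. sat_set \<alpha> H \<and> cost B \<alpha> = c)"

text \<open>A substitution maps each variable to a constant or to a literal;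
  the identity on x is Lit (Pos x).\<close>
datatype 'v sval = Const bool | Lit "'v lit"

fun neg_sval :: "'v sval \<Rightarrow> 'v sval" where
  "neg_sval (Const b) = Const (\<not> b)" | "neg_sval (Lit l) = Lit (negate l)"

type_synonym 'v subst = "'v \<Rightarrow> 'v sval"

fun subst_lit :: "'v subst \<Rightarrow> 'v lit \<Rightarrow> 'v sval" where
  "subst_lit \<sigma> (Pos x) = \<sigma> x" | "subst_lit \<sigma> (Neg x) = neg_sval (\<sigma> x)"

definition is_partial_assignment :: "'v subst \<Rightarrow> bool" where
  "is_partial_assignment \<sigma> \<longleftrightarrow> (\<forall>x. \<sigma> x = Lit (Pos x) \<or> (\<exists>b. \<sigma> x = Const b))"

definition sdom :: "'v subst \<Rightarrow> 'v set" where
  "sdom \<sigma> = {x. \<sigma> x \<noteq> Lit (Pos x)}"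

definition neg_clause :: "'v clause \<Rightarrow> 'v subst" where
  "neg_clause C x = (if Pos x \<in> C then Const False else if Neg x \<in> C then Const True
                     else Lit (Pos x))"

definition lit_assign :: "'v lit \<Rightarrow> 'v subst" where
  "lit_assign l x = (if x = var l then Const (l = Pos x) else Lit (Pos x))"

definition comp_total :: "('v \<Rightarrow> bool) \<Rightarrow> 'v subst \<Rightarrow> ('v \<Rightarrow> bool)" where
  "comp_total \<tau> \<sigma> x = (case \<sigma> x of Const b \<Rightarrow> b | Lit l \<Rightarrow> lit_val \<tau> l)"

definition extends :: "('v \<Rightarrow> bool) \<Rightarrow> 'v subst \<Rightarrow> bool" where
  "extends \<tau> \<rho> \<longleftrightarrow> (\<forall>x b. \<rho> x = Const b \<longrightarrow> \<tau> x = b)"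

definition clause_true_under :: "'v subst \<Rightarrow> 'v clause \<Rightarrow> bool" where
  "clause_true_under \<sigma> C \<longleftrightarrow> (\<exists>l\<in>C. subst_lit \<sigma> l = Const True)"

definition restrict_clause :: "'v subst \<Rightarrow> 'v clause \<Rightarrow> 'v clause" where
  "restrict_clause \<sigma> C = {l'. \<exists>l\<in>C. subst_lit \<sigma> l = Lit l'}"

definition restrict_set :: "'v subst \<Rightarrow> 'v clause set \<Rightarrow> 'v clause set" where
  "restrict_set \<sigma> \<Gamma> = restrict_clause \<sigma> ` {C\<in>\<Gamma>. \<not> clause_true_under \<sigma> C}"

inductive up_refutes :: "'v clause set \<Rightarrow> bool" where
  empty: "{} \<in> F \<Longrightarrow> up_refutes F"
| unit: "{l} \<in> F \<Longrightarrow> up_refutes (restrict_set (lit_assign l) F) \<Longrightarrow> up_refutes F"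

definition up_implies :: "'v clause set \<Rightarrow> 'v clause \<Rightarrow> bool" where
  "up_implies F D \<longleftrightarrow> up_refutes (restrict_set (neg_clause D) F)"

definition sr_cond :: "'v set \<Rightarrow> 'v clause set \<Rightarrow> 'v clause \<Rightarrow> 'v subst \<Rightarrow> bool" where
  "sr_cond B \<Gamma> C \<sigma> \<longleftrightarrow>
     (\<forall>D\<in>restrict_set \<sigma> (insert C \<Gamma>). up_implies (restrict_set (neg_clause C) \<Gamma>) D)
   \<and> (\<forall>\<tau>. extends \<tau> (neg_clause C) \<longrightarrow> cost B (comp_total \<tau> \<sigma>) \<le> cost B \<tau>)"

definition cost_SR :: "'v set \<Rightarrow> 'v clause set \<Rightarrow> 'v clause \<Rightarrow> bool" where
  "cost_SR B \<Gamma> C \<longleftrightarrow> (\<exists>\<sigma>. sr_cond B \<Gamma> C \<sigma>)"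

definition cost_PR :: "'v set \<Rightarrow> 'v clause set \<Rightarrow> 'v clause \<Rightarrow> bool" where
  "cost_PR B \<Gamma> C \<longleftrightarrow> (\<exists>\<sigma>. is_partial_assignment \<sigma> \<and> sr_cond B \<Gamma> C \<sigma>)"

definition cost_SPR :: "'v set \<Rightarrow> 'v clause set \<Rightarrow> 'v clause \<Rightarrow> bool" where
  "cost_SPR B \<Gamma> C \<longleftrightarrow> (\<exists>\<sigma>. is_partial_assignment \<sigma> \<and> sdom \<sigma> = sdom (neg_clause C)
                              \<and> sr_cond B \<Gamma> C \<sigma>)"

definition cost_LPR :: "'v set \<Rightarrow> 'v clause set \<Rightarrow> 'v clause \<Rightarrow> bool" where
  "cost_LPR B \<Gamma> C \<longleftrightarrow> (\<exists>\<sigma>. is_partial_assignment \<sigma> \<and> sdom \<sigma> = sdom (neg_clause C)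
                              \<and> (\<exists>!x. \<sigma> x \<noteq> neg_clause C x) \<and> sr_cond B \<Gamma> C \<sigma>)"

definition cost_BC :: "'v set \<Rightarrow> 'v clause set \<Rightarrow> 'v clause \<Rightarrow> bool" where
  "cost_BC B \<Gamma> E \<longleftrightarrow> (\<exists>l\<in>E.
     (\<forall>D'\<in>\<Gamma>. negate l \<in> D' \<longrightarrow> tautology ((E - {l}) \<union> (D' - {negate l})))
     \<and> (\<forall>b\<in>B. l \<noteq> Pos b))"

datatype redundancy = SR | PR | SPR | LPR | BC

fun redundant :: "redundancy \<Rightarrow> 'v set \<Rightarrow> 'v clause set \<Rightarrow> 'v clause \<Rightarrow> bool" where
  "redundant SR = cost_SR" | "redundant PR = cost_PR" | "redundant SPR = cost_SPR"
| "redundant LPR = cost_LPR" | "redundant BC = cost_BC"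

definition resolvent_from :: "'v clause multiset \<Rightarrow> 'v clause \<Rightarrow> bool" where
  "resolvent_from H C \<longleftrightarrow> (\<exists>C1 C2 x. C1 \<in># H \<and> C2 \<in># H \<and> Pos x \<in> C1 \<and> Neg x \<in> C2
                             \<and> C = (C1 - {Pos x}) \<union> (C2 - {Neg x}))"

definition weakening_from :: "'v clause multiset \<Rightarrow> 'v clause \<Rightarrow> bool" where
  "weakening_from H C \<longleftrightarrow> finite C \<and> (\<exists>C1. C1 \<in># H \<and> C1 \<subseteq> C)"

definition var_in :: "'v \<Rightarrow> 'v clause \<Rightarrow> bool" where
  "var_in x C \<longleftrightarrow> Pos x \<in> C \<or> Neg x \<in> C"

type_synonym 'v state = "'v clause multiset \<times> 'v clause multiset"

definition deriv_step :: "redundancy \<Rightarrow> 'v set \<Rightarrow> 'v state \<Rightarrow> 'v state \<Rightarrow> bool" where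
  "deriv_step P B st st' \<longleftrightarrow> (let (H, S) = st; (H', S') = st' in
      (S' = S \<and> (\<exists>C. H' = add_mset C H \<and> (resolvent_from H C \<or> weakening_from H C)))
    \<or> (S' = S \<and> (\<exists>C. H' = add_mset C H \<and> finite C \<and> redundant P B (set_mset H) C))
    \<or> (H' = H \<and> (\<exists>C. C \<in># H \<and> S' = add_mset C S))
    \<or> (H' = H \<and> (\<exists>C x. C \<in># S \<and> \<not> var_in x C
          \<and> S' = (S - {#C#}) + {#insert (Pos x) C, insert (Neg x) C#}))
    \<or> (H' = H \<and> (\<exists>C x. \<not> var_in x C \<and> {#insert (Pos x) C, insert (Neg x) C#} \<subseteq># S
          \<and> S' = add_mset C (S - {#insert (Pos x) C, insert (Neg x) C#}))))"

definition is_derivation :: "redundancy \<Rightarrow> 'v set \<Rightarrow> 'v state list \<Rightarrow> bool" where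
  "is_derivation P B ds \<longleftrightarrow> ds \<noteq> [] \<and> (\<forall>i. Suc i < length ds \<longrightarrow> deriv_step P B (ds ! i) (ds ! Suc i))"

definition hard0 :: "'v clause list \<Rightarrow> 'v list \<Rightarrow> 'v clause multiset" where
  "hard0 Cs bs = mset (map2 (\<lambda>C b. insert (Pos b) C) Cs bs)"

definition soft0 :: "'v list \<Rightarrow> 'v clause multiset" where
  "soft0 bs = mset (map (\<lambda>b. {Neg b}) bs)"

end

theory Submission
  imports Defs
begin

text \<open>
  Let \<open>k\<close> be the cost of \<open>H\<^sub>0\<close>.  For every
  assignment \<open>s\<close> to the blocking variables with fewer than \<open>k\<close> ones, the clause falsified
  exactly by \<open>s\<close> is entailed by \<open>H\<^sub>0\<close> (a model extending \<open>s\<close> would cost less than \<open>k\<close>),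
  so by completeness of resolution it can be added to the hard clauses by resolution and
  weakening.  The soft units \<open>\<not>b\<^sub>i\<close> are then split along the binary tree of assignments to
  the blocking variables: leaves with fewer than \<open>k\<close> ones are hard clauses and can be copied
  into the soft part, and merging back up the tree yields \<open>k\<close> copies of the empty clause.
\<close>

abbreviation derives :: "redundancy \<Rightarrow> 'v set \<Rightarrow> 'v state \<Rightarrow> 'v state \<Rightarrow> bool" where
  "derives P B \<equiv> (deriv_step P B)\<^sup>*\<^sup>*"

lemma derives_imp_derivation:
  assumes "derives P B st st'"
  shows "\<exists>ds. is_derivation P B ds \<and> hd ds = st \<and> last ds = st'"
proof -
  obtain n f where f: "f 0 = st" "f n = st'" "\<forall>i<n. deriv_step P B (f i) (f (Suc i))"
    using rtranclp_imp_relpowp[OF assms] relpowp_fun_conv by metis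
  have "is_derivation P B (map f [0..<Suc n])"
    using f(3) by (simp add: is_derivation_def del: upt_Suc)
  moreover have "hd (map f [0..<Suc n]) = st" "last (map f [0..<Suc n]) = st'"
    using f(1,2) by (simp_all add: hd_map last_map del: upt_Suc)
  ultimately show ?thesis by blast
qed

lemma deriv_step_resolve: "resolvent_from H C \<Longrightarrow> deriv_step P B (H, S) (add_mset C H, S)"
  by (simp add: deriv_step_def)

lemma deriv_step_weaken: "weakening_from H C \<Longrightarrow> deriv_step P B (H, S) (add_mset C H, S)"
  by (simp add: deriv_step_def)

lemma deriv_step_copy_hard: "C \<in># H \<Longrightarrow> deriv_step P B (H, S) (H, add_mset C S)"
  by (auto simp add: deriv_step_def)

lemma deriv_step_split:
  assumes "\<not> var_in x C"
  shows "deriv_step P B (H, add_mset C S) (H, {#insert (Pos x) C, insert (Neg x) C#} + S)"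
proof -
  have "{#insert (Pos x) C, insert (Neg x) C#} + S
      = add_mset C S - {#C#} + {#insert (Pos x) C, insert (Neg x) C#}"
    and "C \<in># add_mset C S" by simp_all
  then show ?thesis using assms unfolding deriv_step_def Let_def prod.case by blast
qed

lemma deriv_step_merge:
  assumes "\<not> var_in x C"
  shows "deriv_step P B (H, {#insert (Pos x) C, insert (Neg x) C#} + S) (H, add_mset C S)"
proof -
  let ?N = "{#insert (Pos x) C, insert (Neg x) C#}"
  have "add_mset C S = add_mset C (?N + S - ?N)" and "?N \<subseteq># ?N + S" by simp_all
  then show ?thesis using assms unfolding deriv_step_def Let_def prod.case by blast
qed

lemma deriv_step_soft_frame:
  assumes "deriv_step P B (H, S) (H', S')"
  shows "deriv_step P B (H, T + S) (H', T + S')"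
proof -
  have split: "T + (S - {#C#} + N) = T + S - {#C#} + N \<and> C \<in># T + S" if "C \<in># S" for C N
    using that diff_union_single_conv[OF that, of T] by (simp add: add.assoc)
  have merge: "T + add_mset C (S - M) = add_mset C (T + S - M) \<and> M \<subseteq># T + S"
    if "M \<subseteq># S" for C M
    using multiset_diff_union_assoc[OF that, of T]
      subset_mset.order_trans[OF that mset_subset_eq_add_right] by simp
  from assms[unfolded deriv_step_def Let_def prod.case] show ?thesis
  proof (elim disjE conjE exE)
    fix C x
    assume "H' = H" "C \<in># S" "\<not> var_in x C" "S' = S - {#C#} + {#insert (Pos x) C, insert (Neg x) C#}"
    then show ?thesis
      using split[of C] unfolding deriv_step_def Let_def prod.case by blast
  next
    fix C x
    assume "H' = H" "\<not> var_in x C" "{#insert (Pos x) C, insert (Neg x) C#} \<subseteq># S"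
      "S' = add_mset C (S - {#insert (Pos x) C, insert (Neg x) C#})"
    then show ?thesis
      using merge[of "{#insert (Pos x) C, insert (Neg x) C#}" C]
      unfolding deriv_step_def Let_def prod.case by blast
  qed (auto simp: deriv_step_def)
qed

lemma derives_soft_frame:
  "derives P B (H, S) (H', S') \<Longrightarrow> derives P B (H, T + S) (H', T + S')"
  by (induction rule: rtranclp_induct2)
    (auto intro: rtranclp.rtrancl_into_rtrancl deriv_step_soft_frame)

section \<open>Completeness of resolution\<close>

definition entails :: "'v clause set \<Rightarrow> 'v clause \<Rightarrow> bool" where
  "entails F D \<longleftrightarrow> (\<forall>\<alpha>. sat_set \<alpha> F \<longrightarrow> sat_clause \<alpha> D)"

inductive resolution_derivable :: "'v clause set \<Rightarrow> 'v clause \<Rightarrow> bool" for F where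
  axiom: "C \<in> F \<Longrightarrow> resolution_derivable F C"
| resolve: "resolution_derivable F C1 \<Longrightarrow> resolution_derivable F C2 \<Longrightarrow>
    Pos x \<in> C1 \<Longrightarrow> Neg x \<in> C2 \<Longrightarrow> resolution_derivable F ((C1 - {Pos x}) \<union> (C2 - {Neg x}))"

lemma lit_val_canonical_falsifier:
  assumes "\<not> tautology D" "var l \<in> var ` D"
  shows "lit_val (\<lambda>x. Neg x \<in> D) l \<longleftrightarrow> l \<notin> D"
proof (cases l)
  case (Pos x)
  obtain l' where "l' \<in> D" "var l' = x" using assms(2) Pos by auto
  then have "Pos x \<in> D \<or> Neg x \<in> D" by (cases l') auto
  then show ?thesis using assms(1) Pos by (auto simp: tautology_def)
qed simp

lemma resolution_complete_within:
  assumes "finite X" "(\<Union>C\<in>F. var ` C) \<subseteq> X \<union> var ` D" "\<not> tautology D" "entails F D"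
  shows "\<exists>C. resolution_derivable F C \<and> C \<subseteq> D"
  using assms
proof (induction X arbitrary: D rule: finite_induct)
  case empty
  let ?\<alpha> = "\<lambda>x. Neg x \<in> D"
  have "\<not> sat_clause ?\<alpha> D"
    using lit_val_canonical_falsifier[OF empty.prems(2)] by (auto simp: sat_clause_def)
  then obtain C where C: "C \<in> F" "\<not> sat_clause ?\<alpha> C"
    using empty.prems(3) by (auto simp: entails_def sat_set_def)
  have "C \<subseteq> D"
  proof
    fix l assume "l \<in> C"
    moreover from this C(1) empty.prems(1) have "var l \<in> var ` D" by blast
    ultimately show "l \<in> D"
      using C(2) lit_val_canonical_falsifier[OF empty.prems(2)] by (auto simp: sat_clause_def)
  qed
  then show ?case using C(1) axiom by blast
next
  case (insert x X)
  show ?case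
  proof (cases "x \<in> var ` D")
    case True
    then have "(\<Union>C\<in>F. var ` C) \<subseteq> X \<union> var ` D" using insert.prems(1) by auto
    then show ?thesis by (rule insert.IH[OF _ insert.prems(2,3)])
  next
    case False
    then have fresh: "Pos x \<notin> D" "Neg x \<notin> D" by (metis image_eqI var.simps)+
    have "\<exists>C. resolution_derivable F C \<and> C \<subseteq> insert L D" if "var L = x" for L
    proof (rule insert.IH)
      show "(\<Union>C\<in>F. var ` C) \<subseteq> X \<union> var ` insert L D" using insert.prems(1) that by auto
      show "\<not> tautology (insert L D)"
        using insert.prems(2) fresh that by (cases L) (auto simp: tautology_def)
      show "entails F (insert L D)" using insert.prems(3) by (auto simp: entails_def sat_clause_def)
    qed
    from this[of "Pos x"] this[of "Neg x"]
    obtain C1 C2 where C1: "resolution_derivable F C1" "C1 \<subseteq> insert (Pos x) D"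
      and C2: "resolution_derivable F C2" "C2 \<subseteq> insert (Neg x) D"
      by auto
    show ?thesis
    proof (cases "Pos x \<in> C1 \<and> Neg x \<in> C2")
      case True
      then have "resolution_derivable F ((C1 - {Pos x}) \<union> (C2 - {Neg x}))"
        using resolve[OF C1(1) C2(1)] by blast
      moreover have "(C1 - {Pos x}) \<union> (C2 - {Neg x}) \<subseteq> D" using C1(2) C2(2) by blast
      ultimately show ?thesis by blast
    next
      case False
      then show ?thesis using C1 C2 by blast
    qed
  qed
qed

theorem resolution_complete:
  assumes "finite F" "\<forall>C\<in>F. finite C" "\<not> tautology D" "entails F D"
  shows "\<exists>C. resolution_derivable F C \<and> C \<subseteq> D"
  using resolution_complete_within[of "\<Union>C\<in>F. var ` C"] assms by blast

section \<open>Deriving entailed hard clauses\<close>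

lemma deriv_step_hard_mono: "deriv_step P B (H, S) (H', S') \<Longrightarrow> H \<subseteq># H'"
  unfolding deriv_step_def Let_def prod.case by (elim disjE conjE exE) simp_all

lemma derives_hard_mono: "derives P B (H, S) (H', S') \<Longrightarrow> H \<subseteq># H'"
  by (induction rule: rtranclp_induct2) (auto dest: deriv_step_hard_mono)

lemma derives_add_resolution_derivable:
  assumes "resolution_derivable F C" "F \<subseteq> set_mset H"
  shows "\<exists>H'. derives P B (H, S) (H', S) \<and> C \<in># H'"
  using assms
proof (induction arbitrary: H rule: resolution_derivable.induct)
  case (axiom C)
  then show ?case by (intro exI[of _ H]) auto
next
  case (resolve C1 C2 x)
  obtain H1 where H1: "derives P B (H, S) (H1, S)" "C1 \<in># H1"
    using resolve.IH(1) resolve.prems by blast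
  have "F \<subseteq> set_mset H1"
    using resolve.prems set_mset_mono[OF derives_hard_mono[OF H1(1)]] by (rule subset_trans)
  then obtain H2 where H2: "derives P B (H1, S) (H2, S)" "C2 \<in># H2"
    using resolve.IH(2) by blast
  have "C1 \<in># H2" using mset_subset_eqD[OF derives_hard_mono[OF H2(1)] H1(2)] .
  let ?R = "(C1 - {Pos x}) \<union> (C2 - {Neg x})"
  have "resolvent_from H2 ?R"
    unfolding resolvent_from_def using \<open>C1 \<in># H2\<close> H2(2) resolve.hyps(3,4)
    by (intro exI[of _ C1] exI[of _ C2] exI[of _ x]) simp
  then have "deriv_step P B (H2, S) (add_mset ?R H2, S)" by (rule deriv_step_resolve)
  with rtranclp_trans[OF H1(1) H2(1)] have "derives P B (H, S) (add_mset ?R H2, S)"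
    by (rule rtranclp.rtrancl_into_rtrancl)
  then show ?case by (intro exI[of _ "add_mset ?R H2"]) simp
qed

lemma derives_add_entailed:
  assumes "finite F" "\<forall>C\<in>F. finite C" "F \<subseteq> set_mset H"
    and "finite D" "\<not> tautology D" "entails F D"
  shows "\<exists>H'. derives P B (H, S) (H', S) \<and> D \<in># H'"
proof -
  obtain C where C: "resolution_derivable F C" "C \<subseteq> D"
    using resolution_complete assms(1,2,5,6) by blast
  obtain H1 where H1: "derives P B (H, S) (H1, S)" "C \<in># H1"
    using derives_add_resolution_derivable[OF C(1) assms(3)] by blast
  have "weakening_from H1 D" unfolding weakening_from_def using assms(4) C(2) H1(2) by blast
  then have "deriv_step P B (H1, S) (add_mset D H1, S)" by (rule deriv_step_weaken)
  with H1(1) have "derives P B (H, S) (add_mset D H1, S)" by (rule rtranclp.rtrancl_into_rtrancl)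
  then show ?thesis by auto
qed

lemma derives_add_entailed_set:
  assumes "finite Q" "\<forall>D\<in>Q. finite D \<and> \<not> tautology D \<and> entails F D"
    and "finite F" "\<forall>C\<in>F. finite C" "F \<subseteq> set_mset H"
  shows "\<exists>H'. derives P B (H, S) (H', S) \<and> Q \<subseteq> set_mset H'"
  using assms
proof (induction Q arbitrary: H rule: finite_induct)
  case empty
  show ?case by (intro exI[of _ H]) simp
next
  case (insert D Q)
  have "\<exists>H1. derives P B (H, S) (H1, S) \<and> D \<in># H1"
    using insert.prems by (intro derives_add_entailed) auto
  then obtain H1 where H1: "derives P B (H, S) (H1, S)" "D \<in># H1" by blast
  have "F \<subseteq> set_mset H1"
    using insert.prems(4) set_mset_mono[OF derives_hard_mono[OF H1(1)]] by (rule subset_trans)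
  then obtain H2 where H2: "derives P B (H1, S) (H2, S)" "Q \<subseteq> set_mset H2"
    using insert.IH insert.prems(1-3) by blast
  have "D \<in># H2" using mset_subset_eqD[OF derives_hard_mono[OF H2(1)] H1(2)] .
  then show ?case using rtranclp_trans[OF H1(1) H2(1)] H2(2) by blast
qed

section \<open>Collecting empty soft clauses\<close>

lemma derives_copy_hard:
  assumes "C \<in># H"
  shows "derives P B (H, S) (H, S + replicate_mset n C)"
proof (induction n)
  case (Suc n)
  then show ?case
    using deriv_step_copy_hard[OF assms, of P B "S + replicate_mset n C"] by simp
qed simp

lemma derives_split_all:
  assumes "\<forall>C\<in>#M. \<not> var_in x C"
  shows "derives P B (H, M) (H, image_mset (insert (Pos x)) M + image_mset (insert (Neg x)) M)"
  using assms
proof (induction M)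
  case (add C M)
  let ?C2 = "{#insert (Pos x) C, insert (Neg x) C#}"
  have "deriv_step P B (H, add_mset C M) (H, ?C2 + M)"
    using add.prems by (intro deriv_step_split) simp
  also have "derives P B (H, ?C2 + M)
      (H, ?C2 + (image_mset (insert (Pos x)) M + image_mset (insert (Neg x)) M))"
    using add by (intro derives_soft_frame) simp
  finally show ?case by (simp add: ac_simps)
qed simp

lemma derives_merge_copies:
  assumes "\<not> var_in x C"
  shows "derives P B (H, replicate_mset n (insert (Pos x) C) + replicate_mset n (insert (Neg x) C))
    (H, replicate_mset n C)"
proof (induction n)
  case (Suc n)
  let ?C2 = "{#insert (Pos x) C, insert (Neg x) C#}"
  have "derives P B
      (H, ?C2 + (replicate_mset n (insert (Pos x) C) + replicate_mset n (insert (Neg x) C)))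
      (H, ?C2 + replicate_mset n C)"
    using Suc by (rule derives_soft_frame)
  also have "deriv_step P B (H, ?C2 + replicate_mset n C) (H, replicate_mset (Suc n) C)"
    using deriv_step_merge[OF assms] by simp
  finally show ?case by (simp add: ac_simps)
qed simp

definition excluding_clause :: "'v clause \<Rightarrow> 'v set \<Rightarrow> ('v \<Rightarrow> bool) \<Rightarrow> 'v clause" where
  "excluding_clause D Y s = D \<union> (\<lambda>z. if s z then Neg z else Pos z) ` Y"

lemma excluding_clause_insert:
  assumes "y \<notin> Y"
  shows "excluding_clause D (insert y Y) (s(y := b))
    = excluding_clause (insert (if b then Neg y else Pos y) D) Y s"
proof -
  have "(\<lambda>z. if (s(y := b)) z then Neg z else Pos z) ` Y = (\<lambda>z. if s z then Neg z else Pos z) ` Y"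
    using assms by (intro image_cong) auto
  then show ?thesis unfolding excluding_clause_def by auto
qed

lemma sat_excluding_clause_iff:
  "sat_clause \<alpha> (excluding_clause D Y s) \<longleftrightarrow> sat_clause \<alpha> D \<or> (\<exists>z\<in>Y. \<alpha> z \<noteq> s z)"
proof -
  have "lit_val \<alpha> (if s z then Neg z else Pos z) \<longleftrightarrow> \<alpha> z \<noteq> s z" for z by simp
  then show ?thesis unfolding excluding_clause_def sat_clause_def bex_Un image_iff by blast
qed

lemma finite_excluding_clause: "finite D \<Longrightarrow> finite Y \<Longrightarrow> finite (excluding_clause D Y s)"
  unfolding excluding_clause_def by simp

lemma not_tautology_excluding_clause: "\<not> tautology (excluding_clause {} Y s)"
  unfolding excluding_clause_def tautology_def by (auto split: if_splits)

lemma cost_set_le_cost: "sat_set \<alpha> H \<Longrightarrow> cost_set B H \<le> cost B \<alpha>"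
  unfolding cost_set_def by (rule Least_le) blast

lemma entails_excluding_clause_below_cost:
  assumes "card {b\<in>B. s b} < cost_set B F"
  shows "entails F (excluding_clause {} B s)"
  unfolding entails_def
proof (intro allI impI)
  fix \<alpha> assume "sat_set \<alpha> F"
  then have "cost_set B F \<le> cost B \<alpha>" by (rule cost_set_le_cost)
  then have "{b\<in>B. \<alpha> b} \<noteq> {b\<in>B. s b}" using assms unfolding cost_def by auto
  then show "sat_clause \<alpha> (excluding_clause {} B s)" by (auto simp: sat_excluding_clause_iff)
qed

lemma excluding_clauses_insert:
  assumes "finite Y" "y \<notin> Y"
    and "\<forall>s. card {z\<in>insert y Y. s z} < n \<longrightarrow> excluding_clause D (insert y Y) s \<in># H"
  shows "\<forall>s. card {z\<in>Y. s z} < n \<longrightarrow> excluding_clause (insert (Pos y) D) Y s \<in># H"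
    and "\<forall>s. Suc (card {z\<in>Y. s z}) < n \<longrightarrow> excluding_clause (insert (Neg y) D) Y s \<in># H"
proof -
  have "{z \<in> insert y Y. (s(y := False)) z} = {z\<in>Y. s z}" for s
    using assms(2) by auto
  then show "\<forall>s. card {z\<in>Y. s z} < n \<longrightarrow> excluding_clause (insert (Pos y) D) Y s \<in># H"
    using assms(3) excluding_clause_insert[OF assms(2), of D _ False] by metis
  have "card {z \<in> insert y Y. (s(y := True)) z} = Suc (card {z\<in>Y. s z})" for s
  proof -
    have "{z \<in> insert y Y. (s(y := True)) z} = insert y {z\<in>Y. s z}" using assms(2) by auto
    then show ?thesis using assms(1,2) by simp
  qed
  then show "\<forall>s. Suc (card {z\<in>Y. s z}) < n \<longrightarrow> excluding_clause (insert (Neg y) D) Y s \<in># H"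
    using assms(3) excluding_clause_insert[OF assms(2), of D _ True] by metis
qed

lemma derives_combine_copies:
  assumes "\<not> var_in y D"
    and "derives P B (H, U) (H, U1 + U2)"
    and "derives P B (H, U1) (H, replicate_mset (Suc m) (insert (Pos y) D) + R1)"
    and "derives P B (H, U2) (H, replicate_mset m (insert (Neg y) D) + R2)"
  shows "derives P B (H, {#insert (Neg y) D#} + U) (H, replicate_mset (Suc m) D + (R1 + R2))"
proof -
  let ?D1 = "insert (Pos y) D" and ?D2 = "insert (Neg y) D"
  have "derives P B (H, {#?D2#} + U) (H, {#?D2#} + (U1 + U2))"
    using assms(2) by (rule derives_soft_frame)
  also have "\<dots> = (H, ({#?D2#} + U2) + U1)" by (simp add: ac_simps)
  also have "derives P B \<dots> (H, ({#?D2#} + U2) + (replicate_mset (Suc m) ?D1 + R1))"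
    using assms(3) by (rule derives_soft_frame)
  also have "\<dots> = (H, ({#?D2#} + replicate_mset (Suc m) ?D1 + R1) + U2)" by (simp add: ac_simps)
  also have "derives P B \<dots>
      (H, ({#?D2#} + replicate_mset (Suc m) ?D1 + R1) + (replicate_mset m ?D2 + R2))"
    using assms(4) by (rule derives_soft_frame)
  also have "\<dots> = (H, (R1 + R2) + (replicate_mset (Suc m) ?D1 + replicate_mset (Suc m) ?D2))"
    by (simp add: ac_simps)
  also have "derives P B \<dots> (H, (R1 + R2) + replicate_mset (Suc m) D)"
    using derives_merge_copies[OF assms(1)] by (rule derives_soft_frame)
  finally show ?thesis by (simp add: ac_simps)
qed

lemma derives_copies_from_units:
  assumes "finite Y" "\<forall>z\<in>Y. \<not> var_in z D"
    and "\<forall>s. card {z\<in>Y. s z} < n \<longrightarrow> excluding_clause D Y s \<in># H"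
  shows "\<exists>R. derives P B (H, image_mset (\<lambda>z. insert (Neg z) D) (mset_set Y))
                          (H, replicate_mset n D + R)"
  using assms
proof (induction Y arbitrary: D n rule: finite_induct)
  case empty
  show ?case
  proof (cases n)
    case 0
    then show ?thesis by auto
  next
    case (Suc m)
    then have "D \<in># H" using empty.prems(2) by (auto simp: excluding_clause_def)
    then show ?thesis using derives_copy_hard[of D H P B "{#}" n] by (intro exI[of _ "{#}"]) simp
  qed
next
  case (insert y Y)
  let ?units = "\<lambda>D. image_mset (\<lambda>z. insert (Neg z) D) (mset_set Y)"
  define D1 D2 where "D1 = insert (Pos y) D" and "D2 = insert (Neg y) D"
  have soft: "image_mset (\<lambda>z. insert (Neg z) D) (mset_set (insert y Y)) = {#D2#} + ?units D"
    using insert.hyps by (simp add: D2_def)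
  show ?case
  proof (cases n)
    case 0
    then show ?thesis by auto
  next
    case (Suc m)
    have "\<forall>C\<in>#?units D. \<not> var_in y C"
      using insert.hyps insert.prems(1) by (auto simp: var_in_def)
    then have split: "derives P B (H, ?units D) (H, ?units D1 + ?units D2)"
      using derives_split_all[of "?units D" y P B H]
      by (simp add: image_mset.compositionality o_def D1_def D2_def insert_commute)
    note below = excluding_clauses_insert[OF insert.hyps insert.prems(2), folded D1_def D2_def]
    obtain R1 where R1: "derives P B (H, ?units D1) (H, replicate_mset n D1 + R1)"
      using insert.IH[of D1 n] below(1) insert.prems(1) insert.hyps(2)
      by (auto simp: D1_def var_in_def)
    \<comment> \<open>setting \<open>y\<close> true costs one, so only \<open>m = n - 1\<close> copies of \<open>D2\<close> come from the
      recursion; the soft unit \<open>D2\<close> of \<open>y\<close> itself is the last one\<close>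
    obtain R2 where R2: "derives P B (H, ?units D2) (H, replicate_mset m D2 + R2)"
      using insert.IH[of D2 m] below(2) insert.prems(1) insert.hyps(2) Suc
      by (auto simp: D2_def var_in_def)
    have "derives P B (H, {#D2#} + ?units D) (H, replicate_mset n D + (R1 + R2))"
      using derives_combine_copies[OF _ split] R1 R2 insert.prems(1) Suc
      by (simp add: D1_def D2_def)
    then show ?thesis unfolding soft by blast
  qed
qed

theorem theorem7p2:
  fixes P :: redundancy and Cs :: "'v clause list" and bs :: "'v list" and k :: nat
  assumes "length Cs = length bs"
    and "distinct bs"
    and "\<forall>C\<in>set Cs. finite C"
    and "\<forall>C\<in>set Cs. \<forall>l\<in>C. var l \<notin> set bs"
    and "\<exists>\<alpha>. sat_set \<alpha> (set_mset (hard0 Cs bs))"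
    and "cost_set (set bs) (set_mset (hard0 Cs bs)) = k"
  shows "\<exists>ds. is_derivation P (set bs) ds \<and> hd ds = (hard0 Cs bs, soft0 bs)
             \<and> replicate_mset k {} \<subseteq># snd (last ds)"
proof -
  define Q where "Q = excluding_clause {} (set bs) ` {s. card {b\<in>set bs. s b} < k}"
  have "finite Q"
    by (rule finite_subset[of _ "Pow (Pos ` set bs \<union> Neg ` set bs)"])
      (auto simp: Q_def excluding_clause_def)
  moreover have "\<forall>D\<in>Q. finite D \<and> \<not> tautology D \<and> entails (set_mset (hard0 Cs bs)) D"
    using assms(6) entails_excluding_clause_below_cost
    by (auto simp: Q_def finite_excluding_clause not_tautology_excluding_clause)
  moreover have "\<forall>C\<in>set_mset (hard0 Cs bs). finite C"
    using assms(3) by (auto simp: hard0_def dest: set_zip_leftD)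
  ultimately obtain H where
    H: "derives P (set bs) (hard0 Cs bs, soft0 bs) (H, soft0 bs)" "Q \<subseteq> set_mset H"
    using derives_add_entailed_set by blast
  have "soft0 bs = image_mset (\<lambda>z. insert (Neg z) {}) (mset_set (set bs))"
    using assms(2) by (simp add: soft0_def mset_set_set)
  moreover have "\<forall>s. card {b\<in>set bs. s b} < k \<longrightarrow> excluding_clause {} (set bs) s \<in># H"
    using H(2) by (auto simp: Q_def)
  ultimately obtain R where "derives P (set bs) (H, soft0 bs) (H, replicate_mset k {} + R)"
    using derives_copies_from_units[of "set bs" "{}" k H P "set bs"] by (auto simp: var_in_def)
  then obtain ds where "is_derivation P (set bs) ds" "hd ds = (hard0 Cs bs, soft0 bs)"
    "last ds = (H, replicate_mset k {} + R)"
    using derives_imp_derivation rtranclp_trans[OF H(1)] by blast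
  then show ?thesis by auto
qed

end
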